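(* Let $k\ge1$, $n\ge 2k+1$, $g:=\gcd(n,k)$, and $r\in\{0,\dots,n-1\}$. Take the symmetric difference of the union of the edge sets of the $g$ cycles $C(s_0),\dots,C(s_{g-1})$ with the edge sets of the $4$-cycles $(s_{r+j},s_{r+j+k},s_{r+j+2k+1},s_{r+j+k+1})$ for $j=0,\dots,g-2$. The result is the edge set of a single cycle in $K(n,k)$ on the vertex set $\{s_0,\dots,s_{n-1}\}$.
   Context: Vertices of $K(n,k)$ are binary strings of length $n$ with $k$ ones, adjacent iff they have no $1$ at a common position. $\sigma^i$ denotes cyclic right shift by $i$ positions. For $i\in\mathbb{Z}$ (indices mod $n$), $s_i:=\sigma^i(1^k0^{n-k})$. For $x$ such a string, $f(x)$ is obtained by cyclic parenthesis matching ($1$s opening, $0$s closing brackets, each $1$ at position $i$ matched to the last $0$ of the shortest cyclic substring starting at $i$ going right with equally many $0$s and $1$s) and complementing all matched bits; $C(x)=(x,f(x),f^2(x),\dots)$ until $x$ reappears. (One has $f(s_i)=s_{i+k}$, so $C(s_i)=(s_{i+kj})_{j=0,\dots,n/g-1}$ and the cycles $C(s_0),\dots,C(s_{g-1})$ are distinct and partition $\{s_0,\dots,s_{n-1}\}$.) *)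

theory Defs
  imports Main
begin

text \<open>Binary strings are bool lists (True = 1). Positions are 0-based and read cyclically.\<close>

definition kneser_vertex :: "nat \<Rightarrow> nat \<Rightarrow> bool list \<Rightarrow> bool" where
  "kneser_vertex n k x \<longleftrightarrow> length x = n \<and> count_list x True = k"

definition kneser_adj :: "bool list \<Rightarrow> bool list \<Rightarrow> bool" where
  "kneser_adj x y \<longleftrightarrow> (\<forall>p < length x. \<not> (x ! p \<and> y ! p))"

definition sigma :: "bool list \<Rightarrow> bool list" where
  "sigma x = (if x = [] then [] else last x # butlast x)"

definition s :: "nat \<Rightarrow> nat \<Rightarrow> nat \<Rightarrow> bool list" where
  "s n k i = (sigma ^^ i) (replicate k True @ replicate (n - k) False)"

definition bal :: "bool list \<Rightarrow> nat \<Rightarrow> nat \<Rightarrow> bool" where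
  "bal x i d \<longleftrightarrow> 2 * card {j. j \<le> d \<and> x ! ((i + j) mod length x)} = d + 1"

definition opens :: "bool list \<Rightarrow> nat \<Rightarrow> bool" where
  "opens x i \<longleftrightarrow> i < length x \<and> x ! i \<and> (\<exists>d. 0 < d \<and> d < length x \<and> bal x i d)"

text \<open>Offset from a matched 1 at position i to its matching 0 (the last bit of the shortest balanced substring).\<close>
definition mlen :: "bool list \<Rightarrow> nat \<Rightarrow> nat" where
  "mlen x i = (LEAST d. 0 < d \<and> d < length x \<and> bal x i d)"

definition matched :: "bool list \<Rightarrow> nat \<Rightarrow> bool" where
  "matched x p \<longleftrightarrow> opens x p \<or> (\<exists>i. opens x i \<and> (i + mlen x i) mod length x = p)"

definition f :: "bool list \<Rightarrow> bool list" where
  "f x = map (\<lambda>p. if matched x p then \<not> x ! p else x ! p) [0..<length x]"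

definition cyc_len :: "bool list \<Rightarrow> nat" where
  "cyc_len x = (LEAST m. 0 < m \<and> (f ^^ m) x = x)"

definition cycle_edges :: "bool list \<Rightarrow> bool list set set" where
  "cycle_edges x = {{(f ^^ j) x, (f ^^ Suc j) x} | j. j < cyc_len x}"

definition four_cycle_edges :: "'a \<Rightarrow> 'a \<Rightarrow> 'a \<Rightarrow> 'a \<Rightarrow> 'a set set" where
  "four_cycle_edges a b c d = {{a, b}, {b, c}, {c, d}, {d, a}}"

definition symdiff :: "'a set \<Rightarrow> 'a set \<Rightarrow> 'a set" where
  "symdiff A B = (A - B) \<union> (B - A)"

definition is_kneser_cycle :: "nat \<Rightarrow> nat \<Rightarrow> bool list set \<Rightarrow> bool list set set \<Rightarrow> bool" where
  "is_kneser_cycle n k V E \<longleftrightarrow>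
     (\<exists>L v. L \<ge> 3 \<and> inj_on v {..<L} \<and> v ` {..<L} = V \<and>
        (\<forall>i<L. kneser_vertex n k (v i) \<and> kneser_adj (v i) (v (Suc i mod L))) \<and>
        E = {{v i, v (Suc i mod L)} | i. i < L})"

end

theory Submission
  imports Defs "HOL-Number_Theory.Cong"
begin

text \<open>
  The string s_i is the indicator of the cyclic window i, ..., i + k - 1. Its 1s are matched by
  the 0s in the next k positions, so f shifts the window by k and C(s_i) is the cycle
  s_i, s_(i+k), s_(i+2k), ... of length n/g through all s_x with x = i (mod g); these g cycles
  are vertex-disjoint. The j-th 4-cycle consists of the edge s_(r+j) s_(r+j+k) of the cycle of
  class r + j, the edge s_(r+j+k+1) s_(r+j+2k+1) of the cycle of class r + j + 1, and the two
  edges joining their endpoints. Taking the symmetric difference therefore replaces two edges of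
  two disjoint cycles by two edges joining them into one cycle, and by induction the classes
  r, ..., r + j are merged into a single cycle that still contains the edge of class r + j used in
  the next step. All edges involved join windows whose starting points differ by k or k + 1, and
  such windows are disjoint because 2k + 1 \<le> n.
\<close>

section \<open>Windows\<close>

lemma length_sigma [simp]: "length (sigma x) = length x"
  by (cases x) (auto simp: sigma_def)

lemma nth_sigma:
  assumes "p < length x"
  shows "sigma x ! p = x ! ((p + length x - 1) mod length x)"
proof (cases p)
  case 0
  with assms show ?thesis
    by (simp add: sigma_def last_conv_nth)
next
  case (Suc q)
  with assms show ?thesis
    by (auto simp: sigma_def nth_butlast)
qed

lemma count_list_sigma: "count_list (sigma x) a = count_list x a"
  by (cases x rule: rev_cases) (simp_all add: sigma_def)

lemma s_Suc: "s n k (Suc i) = sigma (s n k i)"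
  by (simp add: s_def)

lemma length_s [simp]: "k \<le> n \<Longrightarrow> length (s n k i) = n"
  by (induction i) (simp_all add: s_def)

lemma count_list_s: "k \<le> n \<Longrightarrow> count_list (s n k i) True = k"
proof (induction i)
  case 0
  have "count_list (replicate m True) True = m" for m
    by (induction m) simp_all
  then show ?case
    by (simp add: s_def count_list_0_iff)
next
  case (Suc i)
  then show ?case
    by (simp add: s_Suc count_list_sigma)
qed

lemma kneser_vertex_s: "k \<le> n \<Longrightarrow> kneser_vertex n k (s n k i)"
  by (simp add: kneser_vertex_def count_list_s)

lemma nth_s: "k \<le> n \<Longrightarrow> p < n \<Longrightarrow> s n k i ! p \<longleftrightarrow> (int p - int i) mod int n < int k"
proof (induction i arbitrary: p)
  case 0
  then show ?case
    by (simp add: s_def nth_append)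
next
  case (Suc i)
  have "int (p + n - 1) = (int p - 1) + int n"
    using Suc.prems by simp
  then have "int ((p + n - 1) mod n) = (int p - 1) mod int n"
    by (metis mod_add_self2 of_nat_mod)
  then have "s n k (Suc i) ! p \<longleftrightarrow> ((int p - 1) mod int n - int i) mod int n < int k"
    using Suc by (simp add: s_Suc nth_sigma)
  then show ?case
    by (simp add: mod_diff_left_eq algebra_simps)
qed

lemma nth_s_mod:
  assumes "k \<le> n" "0 < n"
  shows "s n k i ! (j mod n) \<longleftrightarrow> (int j - int i) mod int n < int k"
proof -
  have "(int (j mod n) - int i) mod int n = (int j - int i) mod int n"
    by (simp add: of_nat_mod mod_diff_left_eq)
  then show ?thesis
    using assms by (simp add: nth_s)
qed

lemma s_eq_s_iff:
  assumes "0 < k" "k < n"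
  shows "s n k x = s n k y \<longleftrightarrow> [x = y] (mod n)"
proof
  assume xy: "s n k x = s n k y"
  define D where "D = (int x - int y) mod int n"
  have "s n k x ! (x mod n)"
    using assms by (simp add: nth_s_mod)
  then have "D < int k"
    using assms xy by (simp add: nth_s_mod D_def)
  \<comment> \<open>The bit just before the window of s_x is 0, while in s_y it has offset D - 1.\<close>
  have "\<not> s n k x ! ((x + n - 1) mod n)"
    using assms by (simp add: nth_s_mod of_nat_diff zmod_minus1)
  moreover have "s n k y ! ((x + n - 1) mod n) \<longleftrightarrow> (D - 1) mod int n < int k"
  proof -
    have "int (x + n - 1) - int y = (int x - int y - 1) + int n"
      using assms by simp
    then have "(int (x + n - 1) - int y) mod int n = (D - 1) mod int n"
      unfolding D_def by (metis mod_add_self2 mod_diff_left_eq)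
    then show ?thesis
      using assms by (simp add: nth_s_mod)
  qed
  moreover have "(D - 1) mod int n < int k" if "D \<noteq> 0"
  proof -
    have "0 \<le> D"
      using assms by (simp add: D_def)
    with that \<open>D < int k\<close> assms show ?thesis
      by (simp add: mod_pos_pos_trivial)
  qed
  ultimately have "D = 0"
    using xy by auto
  then have "int x mod int n = int y mod int n"
    by (simp add: D_def mod_eq_dvd_iff dvd_eq_mod_eq_0)
  then show "[x = y] (mod n)"
    by (metis cong_def of_nat_eq_iff of_nat_mod)
next
  assume "[x = y] (mod n)"
  then have "(int p - int x) mod int n = (int p - int y) mod int n" for p
    by (metis cong_def mod_diff_right_eq of_nat_mod)
  then show "s n k x = s n k y"
    using assms by (intro nth_equalityI) (simp_all add: nth_s)
qed

lemma kneser_adj_s_shift: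
  assumes "k \<le> d" "d + k \<le> n"
  shows "kneser_adj (s n k x) (s n k (x + d))"
proof -
  have "\<not> (s n k x ! p \<and> s n k (x + d) ! p)" if "p < n" for p
  proof
    assume both: "s n k x ! p \<and> s n k (x + d) ! p"
    define u where "u = (int p - int (x + d)) mod int n"
    have u: "0 \<le> u" "u < int k"
      using both that assms by (auto simp: u_def nth_s)
    have "(int p - int x) mod int n = (u + int d) mod int n"
      by (simp add: u_def mod_add_left_eq)
    also have "\<dots> = u + int d"
      using u assms by simp
    finally show False
      using both u that assms by (simp add: nth_s)
  qed
  then show ?thesis
    using assms by (simp add: kneser_adj_def)
qed

lemma kneser_adj_sym: "length x = length y \<Longrightarrow> kneser_adj x y \<Longrightarrow> kneser_adj y x"
  by (auto simp: kneser_adj_def)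

definition kneser_edge :: "nat \<Rightarrow> nat \<Rightarrow> bool list set \<Rightarrow> bool" where
  "kneser_edge n k e \<longleftrightarrow>
     (\<exists>x y. e = {x, y} \<and> kneser_vertex n k x \<and> kneser_vertex n k y \<and> kneser_adj x y)"

lemma kneser_edge_s_shift:
  assumes "k \<le> d" "d + k \<le> n"
  shows "kneser_edge n k {s n k x, s n k (x + d)}"
  unfolding kneser_edge_def using assms kneser_adj_s_shift[OF assms, of x]
  by (intro exI[of _ "s n k x"] exI[of _ "s n k (x + d)"]) (simp add: kneser_vertex_s)

lemma kneser_edge_four_cycle:
  assumes "2 * k < n"
    and "e \<in> four_cycle_edges (s n k x) (s n k (x + k)) (s n k (x + 2 * k + 1)) (s n k (x + k + 1))"
  shows "kneser_edge n k e"
proof -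
  have "kneser_edge n k {s n k y, s n k (y + k)}" "kneser_edge n k {s n k y, s n k (y + (k + 1))}" for y
    using assms(1) by (intro kneser_edge_s_shift; simp)+
  from this[of x] this(1)[of "x + k + 1"] this(2)[of "x + k"] this(2)[of x] show ?thesis
    using assms(2) by (auto simp: four_cycle_edges_def insert_commute mult_2 add_ac)
qed

section \<open>Parenthesis matching on a window\<close>

lemma exists_offset_mod: "p < (n::nat) \<Longrightarrow> \<exists>u<n. p = (i + u) mod n"
proof (rule exI[of _ "(p + (n - i mod n)) mod n"], intro conjI)
  assume p: "p < n"
  have "(i + (p + (n - i mod n)) mod n) mod n = (i mod n + (p + (n - i mod n))) mod n"
    by (metis mod_add_eq mod_mod_trivial)
  also have "i mod n + (p + (n - i mod n)) = p + n"
    using p mod_less_divisor[of n i] by linarith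
  finally show "p = (i + (p + (n - i mod n)) mod n) mod n"
    using p by simp
qed simp

lemma offset_mod_eq_iff: "(u::nat) < n \<Longrightarrow> v < n \<Longrightarrow> (i + u) mod n = (i + v) mod n \<longleftrightarrow> u = v"
  by (metis cong_add_lcancel_nat cong_def cong_less_imp_eq_nat zero_le)

lemma nth_s_offset: "k \<le> n \<Longrightarrow> u < n \<Longrightarrow> s n k i ! ((i + u) mod n) \<longleftrightarrow> u < k"
  by (simp add: nth_s_mod)

lemma bal_s:
  assumes "k \<le> n" "u < k" "u + d < n"
  shows "bal (s n k i) ((i + u) mod n) d \<longleftrightarrow> d + 1 = 2 * (k - u)"
proof -
  have "((i + u) mod n + j) mod n = (i + (u + j)) mod n" for j
    by (simp add: mod_add_left_eq add.assoc)
  then have "{j. j \<le> d \<and> s n k i ! (((i + u) mod n + j) mod length (s n k i))}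
      = {..< min (d + 1) (k - u)}"
    using assms by (auto simp: nth_s_offset)
  then have "bal (s n k i) ((i + u) mod n) d \<longleftrightarrow> 2 * min (d + 1) (k - u) = d + 1"
    by (simp add: bal_def)
  then show ?thesis
    by (cases "d + 1 \<le> k - u") (auto simp: min_def)
qed

context
  fixes n k i :: nat
  assumes k_pos: "0 < k" and k_le: "2 * k \<le> n"
begin

lemma opens_s: "u < n \<Longrightarrow> opens (s n k i) ((i + u) mod n) \<longleftrightarrow> u < k"
  using bal_s[of k n u "2 * (k - u) - 1" i] k_pos k_le
  by (auto simp: opens_def nth_s_offset intro!: exI[of _ "2 * (k - u) - 1"])

lemma mlen_s: "u < k \<Longrightarrow> mlen (s n k i) ((i + u) mod n) = 2 * (k - u) - 1"
  unfolding mlen_def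
proof (rule Least_equality)
  assume "u < k"
  then show "0 < 2 * (k - u) - 1 \<and> 2 * (k - u) - 1 < length (s n k i)
      \<and> bal (s n k i) ((i + u) mod n) (2 * (k - u) - 1)"
    using bal_s[of k n u "2 * (k - u) - 1" i] k_le by auto
next
  fix d assume "u < k" "0 < d \<and> d < length (s n k i) \<and> bal (s n k i) ((i + u) mod n) d"
  then show "2 * (k - u) - 1 \<le> d"
    using bal_s[of k n u d i] k_le by (cases "u + d < n") auto
qed

text \<open>The 1 at offset v < k of the window is matched with the 0 at offset 2k - 1 - v.\<close>

lemma matched_sD:
  assumes "u < n" "matched (s n k i) ((i + u) mod n)"
  shows "u < 2 * k"
proof -
  consider "opens (s n k i) ((i + u) mod n)"
    | q where "opens (s n k i) q" "(q + mlen (s n k i) q) mod n = (i + u) mod n"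
    using assms(2) k_le by (auto simp: matched_def)
  then show ?thesis
  proof cases
    case 1
    with assms(1) show ?thesis
      by (simp add: opens_s)
  next
    case 2
    then obtain v where v: "v < n" "q = (i + v) mod n"
      using exists_offset_mod[of q n i] k_le by (auto simp: opens_def)
    with 2 have "v < k"
      by (simp add: opens_s)
    have "v + (2 * (k - v) - 1) = 2 * k - 1 - v"
      using \<open>v < k\<close> by simp
    moreover have "mlen (s n k i) q = 2 * (k - v) - 1"
      using v \<open>v < k\<close> by (simp add: mlen_s)
    ultimately have "(i + (2 * k - 1 - v)) mod n = (i + u) mod n"
      using 2 v by (simp add: mod_add_left_eq add.assoc)
    with assms(1) \<open>v < k\<close> k_le have "u = 2 * k - 1 - v"
      by (subst (asm) offset_mod_eq_iff) auto
    then show ?thesis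
      using k_pos by simp
  qed
qed

lemma matched_sI:
  assumes "k \<le> u" "u < 2 * k"
  shows "matched (s n k i) ((i + u) mod n)"
proof -
  define v where "v = 2 * k - 1 - u"
  have "v < k" "v < n"
    using assms k_le by (auto simp: v_def)
  have "i + v + (2 * (k - v) - 1) = i + u"
    using assms by (simp add: v_def)
  then have "((i + v) mod n + mlen (s n k i) ((i + v) mod n)) mod n = (i + u) mod n"
    unfolding mlen_s[OF \<open>v < k\<close>] by (simp only: mod_add_left_eq)
  moreover have "opens (s n k i) ((i + v) mod n)"
    using \<open>v < k\<close> \<open>v < n\<close> by (simp add: opens_s)
  moreover have "length (s n k i) = n"
    using k_le by simp
  ultimately show ?thesis
    unfolding matched_def by metis
qed

lemma matched_s: "u < n \<Longrightarrow> matched (s n k i) ((i + u) mod n) \<longleftrightarrow> u < 2 * k"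
  using matched_sD matched_sI[of u] opens_s[of u] by (auto simp: matched_def not_less)

lemma nth_s_add_k_offset: "u < n \<Longrightarrow> s n k (i + k) ! ((i + u) mod n) \<longleftrightarrow> k \<le> u \<and> u < 2 * k"
proof -
  assume u: "u < n"
  have "(int (i + u) - int (i + k)) mod int n = (int u - int k) mod int n"
    by simp
  also have "\<dots> = (if k \<le> u then int u - int k else int u - int k + int n)"
  proof (cases "k \<le> u")
    case False
    then have "(int u - int k + int n) mod int n = int u - int k + int n"
      using u k_le by (intro mod_pos_pos_trivial) auto
    with False show ?thesis
      by simp
  qed (use u in \<open>simp add: mod_pos_pos_trivial\<close>)
  finally have "s n k (i + k) ! ((i + u) mod n) \<longleftrightarrow>
      (if k \<le> u then int u - int k else int u - int k + int n) < int k"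
    using u k_le by (simp add: nth_s_mod)
  then show ?thesis
    using k_le by (cases "k \<le> u") auto
qed

theorem f_s: "f (s n k i) = s n k (i + k)"
proof (rule nth_equalityI)
  have "k \<le> n"
    using k_le by simp
  then show "length (f (s n k i)) = length (s n k (i + k))"
    by (simp add: f_def)
  fix p assume "p < length (f (s n k i))"
  with \<open>k \<le> n\<close> obtain u where u: "u < n" "p = (i + u) mod n"
    using exists_offset_mod[of p n i] by (auto simp: f_def)
  with \<open>k \<le> n\<close> have "f (s n k i) ! p \<longleftrightarrow> (if u < 2 * k then \<not> u < k else u < k)"
    by (simp add: f_def matched_s nth_s_offset)
  with u show "f (s n k i) ! p = s n k (i + k) ! p"
    by (auto simp: nth_s_add_k_offset)
qed

end

section \<open>Cycles given by lists of vertices\<close>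

fun path_edges :: "'a list \<Rightarrow> 'a set set" where
  "path_edges (x # y # zs) = insert {x, y} (path_edges (y # zs))"
| "path_edges _ = {}"

definition ring_edges :: "'a list \<Rightarrow> 'a set set" where
  "ring_edges xs = insert {last xs, hd xs} (path_edges xs)"

definition is_cycle :: "'a set \<Rightarrow> 'a set set \<Rightarrow> bool" where
  "is_cycle V E \<longleftrightarrow> (\<exists>xs. distinct xs \<and> 3 \<le> length xs \<and> set xs = V \<and> ring_edges xs = E)"

lemma path_edges_Cons: "path_edges (x # xs) = (if xs = [] then {} else insert {x, hd xs} (path_edges xs))"
  by (cases xs) simp_all

lemma path_edges_append:
  "path_edges (xs @ y # ys) =
     path_edges xs \<union> path_edges (y # ys) \<union> (if xs = [] then {} else {{last xs, y}})"
  by (induction xs rule: path_edges.induct) (auto simp: path_edges_Cons)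

lemma path_edges_subset: "e \<in> path_edges xs \<Longrightarrow> e \<subseteq> set xs"
  by (induction xs rule: path_edges.induct) auto

lemma ring_edges_subset: "e \<in> ring_edges xs \<Longrightarrow> xs \<noteq> [] \<Longrightarrow> e \<subseteq> set xs"
  by (auto simp: ring_edges_def dest: path_edges_subset)

lemma path_edges_rev: "path_edges (rev xs) = path_edges xs"
  by (induction xs) (auto simp: path_edges_append path_edges_Cons hd_rev last_rev insert_commute)

lemma path_edges_nth: "path_edges xs = (\<lambda>i. {xs ! i, xs ! Suc i}) ` {..<length xs - 1}"
  by (induction xs rule: path_edges.induct) (simp_all add: lessThan_Suc_eq_insert_0 image_image)

lemma ring_edges_rev: "xs \<noteq> [] \<Longrightarrow> ring_edges (rev xs) = ring_edges xs"
  by (simp add: ring_edges_def path_edges_rev hd_rev last_rev insert_commute)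

lemma ring_edges_rotate1: "ring_edges (rotate1 xs) = ring_edges xs"
proof (cases xs)
  case (Cons x ys)
  then show ?thesis
    by (cases "ys = []") (auto simp: ring_edges_def path_edges_append path_edges_Cons insert_commute)
qed simp

lemma ring_edges_rotate: "ring_edges (rotate m xs) = ring_edges xs"
  by (induction m) (simp_all add: rotate_Suc ring_edges_rotate1)

lemma path_edges_memE:
  assumes "e \<in> path_edges xs"
  obtains us x y vs where "xs = us @ x # y # vs" "e = {x, y}"
proof -
  from assms have "\<exists>us x y vs. xs = us @ x # y # vs \<and> e = {x, y}"
  proof (induction xs rule: path_edges.induct)
    case (1 x y zs)
    show ?case
    proof (cases "e = {x, y}")
      case True
      then show ?thesis by (intro exI[of _ "[]"]) simp
    next
      case False
      with 1 obtain us x' y' vs where "y # zs = us @ x' # y' # vs" "e = {x', y'}"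
        by auto
      then show ?thesis
        by (intro exI[of _ "x # us"]) simp
    qed
  qed simp_all
  with that show ?thesis
    by blast
qed

lemma ring_edge_closing:
  assumes "e \<in> ring_edges xs"
  shows "\<exists>m. e = {last (rotate m xs), hd (rotate m xs)}"
proof (cases "e \<in> path_edges xs")
  case True
  then obtain us x y vs where xs: "xs = (us @ [x]) @ (y # vs)" and e: "e = {x, y}"
    by (auto elim: path_edges_memE)
  then have "rotate (length (us @ [x])) xs = (y # vs) @ us @ [x]"
    by (simp only: rotate_append)
  then have "last (rotate (length (us @ [x])) xs) = x" "hd (rotate (length (us @ [x])) xs) = y"
    by simp_all
  with e show ?thesis
    by (intro exI[of _ "length (us @ [x])"]) simp
next
  case False
  with assms have "e = {last (rotate 0 xs), hd (rotate 0 xs)}"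
    by (simp add: ring_edges_def)
  then show ?thesis ..
qed

lemma ring_edges_nth:
  assumes "xs \<noteq> []"
  shows "ring_edges xs = (\<lambda>i. {xs ! i, xs ! (Suc i mod length xs)}) ` {..<length xs}"
proof -
  have "{..<length xs} = insert (length xs - 1) {..<length xs - 1}"
    using assms by auto
  moreover have "(\<lambda>i. {xs ! i, xs ! (Suc i mod length xs)}) ` {..<length xs - 1} = path_edges xs"
    by (auto simp: path_edges_nth)
  ultimately show ?thesis
    using assms by (simp add: ring_edges_def last_conv_nth hd_conv_nth)
qed

lemma closing_edge_not_in_path_edges:
  assumes "distinct xs" "3 \<le> length xs"
  shows "{last xs, hd xs} \<notin> path_edges xs"
proof
  assume closing: "{last xs, hd xs} \<in> path_edges xs"
  obtain x y ys where xs: "xs = x # y # ys"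
    using assms(2) by (cases xs rule: path_edges.cases) auto
  with assms have "last xs \<noteq> x" "last xs \<noteq> y"
    by (auto simp: last_in_set)
  moreover from xs assms have "x \<notin> set (y # ys)"
    by simp
  then have "{last xs, x} \<notin> path_edges (y # ys)"
    using path_edges_subset by blast
  ultimately show False
    using closing xs by (auto simp: doubleton_eq_iff)
qed

lemma is_cycle_oriented:
  assumes "is_cycle V E" "{a, b} \<in> E"
  obtains xs where "distinct xs" "3 \<le> length xs" "set xs = V" "E = insert {a, b} (path_edges xs)"
    "{a, b} \<notin> path_edges xs" "last xs = a" "hd xs = b"
proof -
  obtain xs where xs: "distinct xs" "3 \<le> length xs" "set xs = V" "ring_edges xs = E"
    using assms(1) by (auto simp: is_cycle_def)
  then obtain m where m: "{a, b} = {last (rotate m xs), hd (rotate m xs)}"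
    using assms(2) ring_edge_closing by blast
  define ys where "ys = rotate m xs"
  have ys: "distinct ys" "3 \<le> length ys" "set ys = V" "ring_edges ys = E"
    using xs by (simp_all add: ys_def ring_edges_rotate)
  show thesis
  proof (cases "last ys = a")
    case True
    with m have "hd ys = b"
      by (auto simp: ys_def doubleton_eq_iff)
    with True ys closing_edge_not_in_path_edges[of ys] show thesis
      by (intro that[of ys]) (auto simp: ring_edges_def)
  next
    case False
    with m have "last (rev ys) = a" "hd (rev ys) = b"
      using ys(2) by (auto simp: ys_def doubleton_eq_iff hd_rev last_rev)
    moreover have "ring_edges (rev ys) = E"
      using ys ring_edges_rev[of ys] by fastforce
    ultimately show thesis
      using ys closing_edge_not_in_path_edges[of "rev ys"]
      by (intro that[of "rev ys"]) (auto simp: ring_edges_def)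
  qed
qed

lemma ring_edges_append:
  assumes "xs \<noteq> []" "ys \<noteq> []"
  shows "ring_edges (xs @ ys) = path_edges xs \<union> path_edges ys \<union> {{last xs, hd ys}, {last ys, hd xs}}"
proof -
  from assms(2) have "ys = hd ys # tl ys"
    by simp
  then have "path_edges (xs @ ys) = path_edges xs \<union> path_edges ys \<union> {{last xs, hd ys}}"
    using assms(1) path_edges_append[of xs "hd ys" "tl ys"] by simp
  with assms show ?thesis
    by (auto simp: ring_edges_def)
qed

lemma symdiff_exchange:
  assumes "{p, p', q, q'} \<inter> (P \<union> Q) = {}" "p' \<notin> insert p P \<union> insert q Q" "q' \<notin> insert p P \<union> insert q Q"
  shows "symdiff (insert p P \<union> insert q Q) {p, p', q, q'} = P \<union> Q \<union> {p', q'}"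
  using assms by (auto simp: symdiff_def)

theorem is_cycle_merge:
  assumes "is_cycle V\<^sub>1 E\<^sub>1" "is_cycle V\<^sub>2 E\<^sub>2" "V\<^sub>1 \<inter> V\<^sub>2 = {}" "{a, b} \<in> E\<^sub>1" "{c, d} \<in> E\<^sub>2"
  shows "is_cycle (V\<^sub>1 \<union> V\<^sub>2) (symdiff (E\<^sub>1 \<union> E\<^sub>2) (four_cycle_edges a b c d))"
proof -
  obtain xs where xs: "distinct xs" "3 \<le> length xs" "set xs = V\<^sub>1"
      "E\<^sub>1 = insert {a, b} (path_edges xs)"
      "{a, b} \<notin> path_edges xs" "last xs = a" "hd xs = b"
    using assms(1,4) by (rule is_cycle_oriented)
  obtain ys where ys: "distinct ys" "3 \<le> length ys" "set ys = V\<^sub>2"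
      "E\<^sub>2 = insert {c, d} (path_edges ys)"
      "{c, d} \<notin> path_edges ys" "last ys = c" "hd ys = d"
    using assms(2,5) by (rule is_cycle_oriented)
  have "xs \<noteq> []" "ys \<noteq> []"
    using xs(2) ys(2) by auto
  then have in_V: "a \<in> V\<^sub>1" "b \<in> V\<^sub>1" "c \<in> V\<^sub>2" "d \<in> V\<^sub>2"
    using xs ys by auto
  then have "a \<notin> V\<^sub>2" "b \<notin> V\<^sub>2" "c \<notin> V\<^sub>1" "d \<notin> V\<^sub>1"
    using assms(3) by auto
  moreover have "x \<in> V\<^sub>1" if "e \<in> path_edges xs" "x \<in> e" for e x
    using that xs(3) path_edges_subset by blast
  moreover have "x \<in> V\<^sub>2" if "e \<in> path_edges ys" "x \<in> e" for e x
    using that ys(3) path_edges_subset by blast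
  ultimately have disjoint: "four_cycle_edges a b c d \<inter> (path_edges xs \<union> path_edges ys) = {}"
    "{b, c} \<notin> E\<^sub>1 \<union> E\<^sub>2" "{d, a} \<notin> E\<^sub>1 \<union> E\<^sub>2"
    using xs(4,5) ys(4,5) in_V unfolding four_cycle_edges_def
    by (auto simp: doubleton_eq_iff)
  from disjoint have "symdiff (E\<^sub>1 \<union> E\<^sub>2) (four_cycle_edges a b c d)
      = path_edges xs \<union> path_edges ys \<union> {{b, c}, {d, a}}"
    unfolding four_cycle_edges_def xs(4) ys(4) by (intro symdiff_exchange) simp_all
  also have "\<dots> = ring_edges (xs @ ys)"
    using \<open>xs \<noteq> []\<close> \<open>ys \<noteq> []\<close> xs(6,7) ys(6,7) by (auto simp: ring_edges_append)
  finally show ?thesis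
    unfolding is_cycle_def using xs ys assms(3)
    by (intro exI[of _ "xs @ ys"]) auto
qed

lemma is_cycle_edge_subset: "is_cycle V E \<Longrightarrow> e \<in> E \<Longrightarrow> e \<subseteq> V"
  by (auto simp: is_cycle_def dest: ring_edges_subset)

lemma is_kneser_cycle_if_is_cycle:
  assumes "is_cycle V E" "\<forall>e\<in>E. kneser_edge n k e"
  shows "is_kneser_cycle n k V E"
proof -
  obtain xs where xs: "distinct xs" "3 \<le> length xs" "set xs = V" "ring_edges xs = E"
    using assms(1) by (auto simp: is_cycle_def)
  let ?L = "length xs" and ?v = "nth xs"
  have "xs \<noteq> []"
    using xs(2) by auto
  then have E: "E = {{?v i, ?v (Suc i mod ?L)} | i. i < ?L}"
    using xs(4) by (auto simp: ring_edges_nth)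
  have "kneser_vertex n k (?v i) \<and> kneser_adj (?v i) (?v (Suc i mod ?L))" if "i < ?L" for i
  proof -
    from that E assms(2) obtain x y where
      xy: "{?v i, ?v (Suc i mod ?L)} = {x, y}"
        "kneser_vertex n k x" "kneser_vertex n k y" "kneser_adj x y"
      unfolding kneser_edge_def by blast
    then have "kneser_adj y x"
      by (auto simp: kneser_vertex_def intro: kneser_adj_sym)
    with xy show ?thesis
      by (auto simp: doubleton_eq_iff)
  qed
  moreover have "inj_on ?v {..<?L}" "?v ` {..<?L} = V"
    using xs by (simp_all add: inj_on_nth atLeast0LessThan[symmetric] nth_image)
  ultimately show ?thesis
    unfolding is_kneser_cycle_def using xs(2) E by blast
qed

lemma symdiff_Un_disjoint: "F \<inter> R = {} \<Longrightarrow> symdiff (X \<union> R) F = symdiff X F \<union> R"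
  by (auto simp: symdiff_def)

lemma foldl_symdiff_subset: "foldl (\<lambda>A j. symdiff A (F j)) A js \<subseteq> A \<union> (\<Union>j\<in>set js. F j)"
  by (induction js arbitrary: A) (fastforce simp: symdiff_def)+

section \<open>The cycles C(s_i)\<close>

lemma cong_add_mult_gcd: "[x + j * k = x] (mod gcd n k)" for x j k n :: nat
  by (simp add: cong_add_lcancel_0_nat cong_0_iff)

lemma dvd_mult_iff_div_gcd_dvd:
  fixes n k j :: nat
  assumes "0 < k"
  shows "n dvd j * k \<longleftrightarrow> n div gcd n k dvd j"
proof -
  have "n dvd j * k \<longleftrightarrow> lcm n k dvd j * k"
    by (simp add: lcm_least_iff)
  also have "lcm n k = n div gcd n k * k"
    using div_mult_swap[of "gcd n k" n k] by (simp add: lcm_nat_def mult.commute)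
  finally show ?thesis
    using assms by simp
qed

lemma cong_add_mult_exists:
  fixes n k c x :: nat
  assumes "0 < n" "[x = c] (mod gcd n k)"
  shows "\<exists>j < n div gcd n k. [x = c + j * k] (mod n)"
proof -
  \<comment> \<open>Adding c * n avoids the truncated difference x - c.\<close>
  have le: "c \<le> x + c * n"
    using assms(1) by (simp add: trans_le_add2)
  have "[x + c * n = c] (mod gcd n k)"
    using assms(2) by (meson cong_0_iff cong_add_lcancel_0_nat cong_trans dvd_triv_right gcd_dvdI1)
  with le have "gcd k n dvd x + c * n - c"
    by (simp add: cong_altdef_nat gcd.commute)
  then obtain j0 where "[k * j0 = x + c * n - c] (mod n)"
    using cong_solve_dvd_nat by blast
  with le have j0: "[c + j0 * k = x] (mod n)"
    by (metis add.commute cong_add_lcancel_nat cong_def le_add_diff_inverse2 mod_mult_self2 mult.commute)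
  define m where "m = n div gcd n k"
  have "m * k = n * (k div gcd n k)"
    unfolding m_def by (metis div_mult_swap gcd_dvd1 gcd_dvd2 mult.commute)
  then have "[j0 mod m * k = j0 * k] (mod n)"
    by (metis cong_def cong_modulus_mult_nat dvd_def mod_mod_trivial mult.commute mult_mod_right)
  then have "[x = c + j0 mod m * k] (mod n)"
    using j0 by (metis cong_add_lcancel_nat cong_sym cong_trans)
  moreover have "j0 mod m < m"
    using assms(1) by (simp add: m_def div_greater_zero_iff gcd_le1_nat)
  ultimately show ?thesis
    unfolding m_def by blast
qed

definition s_orbit :: "nat \<Rightarrow> nat \<Rightarrow> nat \<Rightarrow> bool list list" where
  "s_orbit n k i = map (\<lambda>j. s n k (i + j * k)) [0..<n div gcd n k]"

definition s_class :: "nat \<Rightarrow> nat \<Rightarrow> nat \<Rightarrow> bool list set" where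
  "s_class n k i = s n k ` {x. [x = i] (mod gcd n k)}"

lemma s_mem_s_class: "[x = i] (mod gcd n k) \<Longrightarrow> s n k x \<in> s_class n k i"
  by (simp add: s_class_def)

lemma s_class_cong: "[i = j] (mod gcd n k) \<Longrightarrow> s_class n k i = s_class n k j"
  unfolding s_class_def by (metis cong_sym cong_trans)

context
  fixes n k :: nat
  assumes k_pos: "0 < k" and k_less: "2 * k < n"
begin

lemma funpow_f_s: "(f ^^ j) (s n k i) = s n k (i + j * k)"
  using k_pos k_less by (induction j) (simp_all add: f_s algebra_simps)

lemma s_add_mult_eq_iff: "s n k (i + j * k) = s n k i \<longleftrightarrow> n div gcd n k dvd j"
proof -
  have "s n k (i + j * k) = s n k i \<longleftrightarrow> [i + j * k = i] (mod n)"
    using k_pos k_less by (simp add: s_eq_s_iff)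
  also have "\<dots> \<longleftrightarrow> n dvd j * k"
    by (simp add: cong_add_lcancel_0_nat cong_0_iff)
  finally show ?thesis
    using k_pos by (simp add: dvd_mult_iff_div_gcd_dvd)
qed

lemma three_le_div_gcd: "3 \<le> n div gcd n k"
proof -
  have "gcd n k \<le> k"
    using k_pos by (simp add: gcd_le2_nat)
  then have "gcd n k * 2 < gcd n k * (n div gcd n k)"
    using k_less by simp
  then show ?thesis
    by (subst (asm) mult_less_cancel1) simp
qed

lemma cyc_len_s: "cyc_len (s n k i) = n div gcd n k"
  unfolding cyc_len_def
proof (rule Least_equality)
  show "0 < n div gcd n k \<and> (f ^^ (n div gcd n k)) (s n k i) = s n k i"
    using three_le_div_gcd by (simp add: funpow_f_s s_add_mult_eq_iff)
next
  fix j assume "0 < j \<and> (f ^^ j) (s n k i) = s n k i"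
  then show "n div gcd n k \<le> j"
    by (simp add: funpow_f_s s_add_mult_eq_iff dvd_imp_le)
qed

lemma cycle_edges_s:
  "cycle_edges (s n k i) = (\<lambda>j. {s n k (i + j * k), s n k (i + Suc j * k)}) ` {..<n div gcd n k}"
  by (auto simp: cycle_edges_def cyc_len_s funpow_f_s simp del: funpow.simps)

lemma ring_edges_s_orbit: "ring_edges (s_orbit n k i) = cycle_edges (s n k i)"
proof -
  let ?m = "n div gcd n k"
  have "s n k (i + Suc j mod ?m * k) = s n k (i + Suc j * k)" if "j < ?m" for j
  proof (cases "Suc j = ?m")
    case True
    have "s n k (i + ?m * k) = s n k i"
      by (rule s_add_mult_eq_iff[THEN iffD2]) simp
    then show ?thesis
      unfolding True by simp
  next
    case False
    with that have "Suc j mod ?m = Suc j"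
      by (intro mod_less) linarith
    then show ?thesis
      by (simp only:)
  qed
  moreover have "s_orbit n k i \<noteq> []"
    using three_le_div_gcd by (simp add: s_orbit_def)
  ultimately show ?thesis
    by (simp add: ring_edges_nth cycle_edges_s s_orbit_def)
qed

lemma distinct_s_orbit: "distinct (s_orbit n k i)"
proof -
  have le_case: "j' = j" if "j < n div gcd n k" "j' \<le> j" "s n k (i + j * k) = s n k (i + j' * k)"
    for j j'
  proof -
    obtain d where d: "j = j' + d"
      using \<open>j' \<le> j\<close> le_Suc_ex by blast
    then have "s n k ((i + j' * k) + d * k) = s n k (i + j' * k)"
      using that(3) by (simp add: algebra_simps)
    then have "n div gcd n k dvd d"
      by (simp only: s_add_mult_eq_iff)
    moreover have "d < n div gcd n k"
      using that(1) d by simp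
    ultimately show ?thesis
      using d nat_dvd_not_less by fastforce
  qed
  have "inj_on (\<lambda>j. s n k (i + j * k)) {..<n div gcd n k}"
  proof (rule inj_onI)
    fix j j' assume j: "j \<in> {..<n div gcd n k}" "j' \<in> {..<n div gcd n k}"
      and eq: "s n k (i + j * k) = s n k (i + j' * k)"
    show "j = j'"
    proof (cases "j' \<le> j")
      case True
      with j eq show ?thesis
        using le_case[of j j'] by simp
    next
      case False
      with j eq show ?thesis
        using le_case[of j' j] by simp
    qed
  qed
  then show ?thesis
    by (simp add: s_orbit_def distinct_map atLeast0LessThan)
qed

lemma set_s_orbit: "set (s_orbit n k i) = s_class n k i"
proof
  show "set (s_orbit n k i) \<subseteq> s_class n k i"
    by (auto simp: s_orbit_def intro: s_mem_s_class cong_add_mult_gcd)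
next
  show "s_class n k i \<subseteq> set (s_orbit n k i)"
  proof (clarsimp simp: s_class_def)
    fix x assume "[x = i] (mod gcd n k)"
    then obtain j where j: "j < n div gcd n k" "[x = i + j * k] (mod n)"
      using cong_add_mult_exists[of n x i k] k_less by auto
    then have "s n k x = s n k (i + j * k)"
      using k_pos k_less by (simp add: s_eq_s_iff)
    with j(1) show "s n k x \<in> set (s_orbit n k i)"
      by (simp add: s_orbit_def)
  qed
qed

lemma is_cycle_s_class: "is_cycle (s_class n k i) (cycle_edges (s n k i))"
proof -
  have "length (s_orbit n k i) = n div gcd n k"
    by (simp add: s_orbit_def)
  then show ?thesis
    unfolding is_cycle_def
    by (intro exI[of _ "s_orbit n k i"])
       (simp add: distinct_s_orbit set_s_orbit ring_edges_s_orbit three_le_div_gcd)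
qed

lemma cycle_edges_s_residues:
  "cycle_edges (s n k i) = {{s n k x, s n k (x + k)} | x. [x = i] (mod gcd n k)}"
proof
  show "cycle_edges (s n k i) \<subseteq> {{s n k x, s n k (x + k)} | x. [x = i] (mod gcd n k)}"
  proof
    fix e assume "e \<in> cycle_edges (s n k i)"
    then obtain j where "e = {s n k (i + j * k), s n k (i + Suc j * k)}"
      by (auto simp: cycle_edges_s)
    moreover have "i + Suc j * k = (i + j * k) + k"
      by simp
    ultimately show "e \<in> {{s n k x, s n k (x + k)} | x. [x = i] (mod gcd n k)}"
      using cong_add_mult_gcd by (metis (mono_tags, lifting) mem_Collect_eq)
  qed
next
  show "{{s n k x, s n k (x + k)} | x. [x = i] (mod gcd n k)} \<subseteq> cycle_edges (s n k i)"
  proof clarify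
    fix x assume "[x = i] (mod gcd n k)"
    then obtain j where j: "j < n div gcd n k" "[x = i + j * k] (mod n)"
      using cong_add_mult_exists[of n x i k] k_less by auto
    then have "[x + k = i + Suc j * k] (mod n)"
      using cong_add[OF j(2) cong_refl[of k]] by (simp add: algebra_simps)
    with j have "s n k x = s n k (i + j * k)" "s n k (x + k) = s n k (i + Suc j * k)"
      using k_pos k_less by (simp_all add: s_eq_s_iff)
    with j(1) show "{s n k x, s n k (x + k)} \<in> cycle_edges (s n k i)"
      by (simp add: cycle_edges_s)
  qed
qed

lemma edge_mem_cycle_edges_s: "[x = i] (mod gcd n k) \<Longrightarrow> {s n k x, s n k (x + k)} \<in> cycle_edges (s n k i)"
  by (auto simp: cycle_edges_s_residues)

lemma cycle_edges_s_cong: "[i = j] (mod gcd n k) \<Longrightarrow> cycle_edges (s n k i) = cycle_edges (s n k j)"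
  unfolding cycle_edges_s_residues by (metis cong_sym cong_trans)

lemma s_class_disjoint:
  assumes "\<not> [i = j] (mod gcd n k)"
  shows "s_class n k i \<inter> s_class n k j = {}"
proof -
  have False if "[x = i] (mod gcd n k)" "[y = j] (mod gcd n k)" "s n k x = s n k y" for x y
  proof -
    have "[x = y] (mod n)"
      using that(3) k_pos k_less by (simp add: s_eq_s_iff)
    then have "[x = y] (mod gcd n k)"
      by (rule cong_dvd_modulus_nat) simp
    with that(1,2) assms show False
      by (meson cong_sym cong_trans)
  qed
  then show ?thesis
    unfolding s_class_def by blast
qed

end

section \<open>Merging the cycles\<close>

lemma UN_residues_shift:
  fixes g r :: nat
  assumes "0 < g" "\<And>i j. [i = j] (mod g) \<Longrightarrow> A i = A j"
  shows "(\<Union>i<g. A i) = (\<Union>c<g. A (r + c))"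
proof
  show "(\<Union>i<g. A i) \<subseteq> (\<Union>c<g. A (r + c))"
  proof clarify
    fix x i assume "i < g" "x \<in> A i"
    moreover obtain c where "c < g" "i = (r + c) mod g"
      using exists_offset_mod[OF \<open>i < g\<close>, of r] by blast
    moreover from this have "A i = A (r + c)"
      using assms(2)[of i "r + c"] by (simp add: cong_def)
    ultimately show "x \<in> (\<Union>c<g. A (r + c))"
      by blast
  qed
next
  show "(\<Union>c<g. A (r + c)) \<subseteq> (\<Union>i<g. A i)"
  proof clarify
    fix x c assume "c < g" "x \<in> A (r + c)"
    moreover have "A (r + c) = A ((r + c) mod g)"
      using assms(2)[of "r + c" "(r + c) mod g"] by (simp add: cong_def)
    ultimately show "x \<in> (\<Union>i<g. A i)"
      using assms(1) by auto
  qed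
qed

definition merge_step :: "nat \<Rightarrow> nat \<Rightarrow> nat \<Rightarrow> bool list set set \<Rightarrow> nat \<Rightarrow> bool list set set" where
  "merge_step n k r A j = symdiff A (four_cycle_edges (s n k (r + j)) (s n k (r + j + k))
                                     (s n k (r + j + 2 * k + 1)) (s n k (r + j + k + 1)))"

lemma four_cycle_vertices_mem_s_class:
  "s n k (r + t) \<in> s_class n k (r + t)" "s n k (r + t + k) \<in> s_class n k (r + t)"
  "s n k (r + t + 2 * k + 1) \<in> s_class n k (r + Suc t)" "s n k (r + t + k + 1) \<in> s_class n k (r + Suc t)"
proof -
  have "r + t + 2 * k + 1 = (r + Suc t) + 2 * k" "r + t + k + 1 = (r + Suc t) + 1 * k"
    by simp_all
  then show "s n k (r + t + 2 * k + 1) \<in> s_class n k (r + Suc t)"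
    "s n k (r + t + k + 1) \<in> s_class n k (r + Suc t)"
    using cong_add_mult_gcd[of "r + Suc t" 2 k n] cong_add_mult_gcd[of "r + Suc t" 1 k n]
    by (simp_all only: s_mem_s_class)
  show "s n k (r + t) \<in> s_class n k (r + t)" "s n k (r + t + k) \<in> s_class n k (r + t)"
    using cong_add_mult_gcd[of "r + t" 1 k n] by (simp_all add: s_mem_s_class)
qed

context
  fixes n k r :: nat
  assumes k_pos: "0 < k" and k_less: "2 * k < n"
begin

lemma s_class_add_disjoint:
  "c < gcd n k \<Longrightarrow> c' < gcd n k \<Longrightarrow> c \<noteq> c' \<Longrightarrow> s_class n k (r + c) \<inter> s_class n k (r + c') = {}"
  by (intro s_class_disjoint[OF k_pos k_less]) (simp add: cong_add_lcancel_nat, simp add: cong_def)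

lemma UN_s_class: "(\<Union>c<gcd n k. s_class n k (r + c)) = s n k ` {..<n}"
proof -
  have "(\<Union>c<gcd n k. s_class n k (r + c)) = (\<Union>i<gcd n k. s_class n k i)"
    using k_pos by (intro UN_residues_shift[symmetric] s_class_cong) simp_all
  also have "\<dots> = s n k ` UNIV"
  proof -
    have "\<exists>i<gcd n k. [x = i] (mod gcd n k)" for x
      using k_pos by (intro exI[of _ "x mod gcd n k"]) (simp add: cong_def)
    then show ?thesis
      unfolding s_class_def by blast
  qed
  also have "\<dots> = s n k ` {..<n}"
  proof -
    have "s n k x \<in> s n k ` {..<n}" for x
    proof (rule image_eqI)
      show "s n k x = s n k (x mod n)"
        using k_pos k_less by (simp add: s_eq_s_iff cong_def)
      show "x mod n \<in> {..<n}"
        using k_less by simp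
    qed
    then show ?thesis
      by blast
  qed
  finally show ?thesis .
qed

lemma merge_step_Un_later_classes:
  "merge_step n k r (A \<union> (\<Union>c\<in>{Suc (Suc t)..<gcd n k}. cycle_edges (s n k (r + c)))) t
     = merge_step n k r A t \<union> (\<Union>c\<in>{Suc (Suc t)..<gcd n k}. cycle_edges (s n k (r + c)))"
  unfolding merge_step_def
proof (rule symdiff_Un_disjoint)
  have "e \<subseteq> s_class n k (r + c)" if "e \<in> cycle_edges (s n k (r + c))" for e c
    using is_cycle_edge_subset[OF is_cycle_s_class[OF k_pos k_less] that] .
  moreover have "s n k (r + t) \<notin> s_class n k (r + c)" "s n k (r + t + 2 * k + 1) \<notin> s_class n k (r + c)"
    if "c \<in> {Suc (Suc t)..<gcd n k}" for c
    using that four_cycle_vertices_mem_s_class[of n k r t]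
      s_class_add_disjoint[of t c] s_class_add_disjoint[of "Suc t" c] by auto
  ultimately show "four_cycle_edges (s n k (r + t)) (s n k (r + t + k)) (s n k (r + t + 2 * k + 1))
      (s n k (r + t + k + 1)) \<inter> (\<Union>c\<in>{Suc (Suc t)..<gcd n k}. cycle_edges (s n k (r + c))) = {}"
    unfolding four_cycle_edges_def by blast
qed

lemma is_cycle_merge_step:
  assumes "Suc t < gcd n k" "is_cycle (\<Union>c\<le>t. s_class n k (r + c)) M"
    and "{s n k (r + t), s n k (r + t + k)} \<in> M"
  shows "is_cycle (\<Union>c\<le>Suc t. s_class n k (r + c))
           (merge_step n k r (M \<union> cycle_edges (s n k (r + Suc t))) t)"
proof -
  have "s_class n k (r + c) \<inter> s_class n k (r + Suc t) = {}" if "c \<le> t" for c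
    using that assms(1) by (intro s_class_add_disjoint) auto
  then have "(\<Union>c\<le>t. s_class n k (r + c)) \<inter> s_class n k (r + Suc t) = {}"
    by blast
  moreover have "{s n k (r + t + 2 * k + 1), s n k (r + t + k + 1)} \<in> cycle_edges (s n k (r + Suc t))"
  proof -
    have "[r + t + k + 1 = r + Suc t] (mod gcd n k)"
      using cong_add_mult_gcd[of "r + Suc t" 1 k n] by simp
    then have "{s n k (r + t + k + 1), s n k (r + t + k + 1 + k)} \<in> cycle_edges (s n k (r + Suc t))"
      by (rule edge_mem_cycle_edges_s[OF k_pos k_less])
    moreover have "r + t + k + 1 + k = r + t + 2 * k + 1"
      by simp
    ultimately show ?thesis
      by (metis insert_commute)
  qed
  ultimately have "is_cycle ((\<Union>c\<le>t. s_class n k (r + c)) \<union> s_class n k (r + Suc t))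
      (merge_step n k r (M \<union> cycle_edges (s n k (r + Suc t))) t)"
    unfolding merge_step_def using assms(2,3) is_cycle_s_class[OF k_pos k_less]
    by (intro is_cycle_merge) simp_all
  moreover have "(\<Union>c\<le>t. s_class n k (r + c)) \<union> s_class n k (r + Suc t)
      = (\<Union>c\<le>Suc t. s_class n k (r + c))"
    by (auto simp: atMost_Suc)
  ultimately show ?thesis
    by simp
qed

lemma edge_mem_merge_step:
  assumes "Suc t < gcd n k"
  shows "{s n k (r + Suc t), s n k (r + Suc t + k)}
           \<in> merge_step n k r (M \<union> cycle_edges (s n k (r + Suc t))) t"
proof -
  let ?e = "{s n k (r + Suc t), s n k (r + Suc t + k)}"
  have "?e \<in> cycle_edges (s n k (r + Suc t))"
    using edge_mem_cycle_edges_s[OF k_pos k_less, of "r + Suc t" "r + Suc t"] by simp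
  then have "?e \<subseteq> s_class n k (r + Suc t)"
    by (rule is_cycle_edge_subset[OF is_cycle_s_class[OF k_pos k_less]])
  moreover have "s n k (r + t) \<notin> s_class n k (r + Suc t)" "s n k (r + t + k) \<notin> s_class n k (r + Suc t)"
    using four_cycle_vertices_mem_s_class[of n k r t] s_class_add_disjoint[of t "Suc t"] assms by auto
  moreover have shift_ne: "s n k (y + j * k) \<noteq> s n k y" if "0 < j" "j < 3" for y j
    using that three_le_div_gcd[OF k_pos k_less] nat_dvd_not_less[of j "n div gcd n k"]
    by (simp add: s_add_mult_eq_iff[OF k_pos k_less])
  have "r + t + 2 * k + 1 = r + Suc t + 2 * k" "r + t + k + 1 = r + Suc t + 1 * k"
    by simp_all
  then have "s n k (r + Suc t) \<notin> {s n k (r + t + 2 * k + 1), s n k (r + t + k + 1)}"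
    using shift_ne[of 2 "r + Suc t"] shift_ne[of 1 "r + Suc t"] by auto
  ultimately have "?e \<notin> four_cycle_edges (s n k (r + t)) (s n k (r + t + k))
      (s n k (r + t + 2 * k + 1)) (s n k (r + t + k + 1))"
    unfolding four_cycle_edges_def by blast
  with \<open>?e \<in> cycle_edges (s n k (r + Suc t))\<close> show ?thesis
    by (simp add: merge_step_def symdiff_def)
qed

text \<open>The last conjunct provides the edge of class r + t that the next 4-cycle removes.\<close>

lemma merge_invariant:
  assumes "t < gcd n k"
  shows "\<exists>M. foldl (merge_step n k r) (\<Union>i<gcd n k. cycle_edges (s n k i)) [0..<t]
              = M \<union> (\<Union>c\<in>{Suc t..<gcd n k}. cycle_edges (s n k (r + c)))
          \<and> is_cycle (\<Union>c\<le>t. s_class n k (r + c)) M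
          \<and> {s n k (r + t), s n k (r + t + k)} \<in> M"
  using assms
proof (induction t)
  case 0
  have "{..<gcd n k} = insert 0 {Suc 0..<gcd n k}"
    using k_pos by auto
  moreover have "(\<Union>i<gcd n k. cycle_edges (s n k i)) = (\<Union>c<gcd n k. cycle_edges (s n k (r + c)))"
    using k_pos by (intro UN_residues_shift cycle_edges_s_cong[OF k_pos k_less]) simp_all
  ultimately show ?case
    using is_cycle_s_class[OF k_pos k_less, of r] edge_mem_cycle_edges_s[OF k_pos k_less, of r r]
    by (intro exI[of _ "cycle_edges (s n k r)"]) simp
next
  case (Suc t)
  then obtain M where fold: "foldl (merge_step n k r) (\<Union>i<gcd n k. cycle_edges (s n k i)) [0..<t]
        = M \<union> (\<Union>c\<in>{Suc t..<gcd n k}. cycle_edges (s n k (r + c)))"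
    and M: "is_cycle (\<Union>c\<le>t. s_class n k (r + c)) M" "{s n k (r + t), s n k (r + t + k)} \<in> M"
    by auto
  have "{Suc t..<gcd n k} = insert (Suc t) {Suc (Suc t)..<gcd n k}"
    using Suc.prems by auto
  then have "foldl (merge_step n k r) (\<Union>i<gcd n k. cycle_edges (s n k i)) [0..<Suc t]
      = merge_step n k r (M \<union> cycle_edges (s n k (r + Suc t))) t
        \<union> (\<Union>c\<in>{Suc (Suc t)..<gcd n k}. cycle_edges (s n k (r + c)))"
    using fold by (simp add: Un_assoc flip: merge_step_Un_later_classes)
  with Suc.prems M show ?case
    by (blast intro: is_cycle_merge_step edge_mem_merge_step)
qed

lemma is_cycle_merged:
  "is_cycle (s n k ` {..<n})
     (foldl (merge_step n k r) (\<Union>i<gcd n k. cycle_edges (s n k i)) [0..<gcd n k - 1])"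
proof -
  obtain h where "gcd n k = Suc h"
    using k_pos gr0_implies_Suc[of "gcd n k"] by auto
  then have "gcd n k - 1 < gcd n k" "{Suc (gcd n k - 1)..<gcd n k} = {}"
    "{..gcd n k - 1} = {..<gcd n k}"
    by (simp_all add: lessThan_Suc_atMost)
  with merge_invariant[of "gcd n k - 1"] UN_s_class show ?thesis
    by auto
qed

lemma kneser_edge_if_mem_merged:
  assumes "e \<in> foldl (merge_step n k r) (\<Union>i<gcd n k. cycle_edges (s n k i)) js"
  shows "kneser_edge n k e"
proof -
  have "e \<in> (\<Union>i<gcd n k. cycle_edges (s n k i)) \<union> (\<Union>j\<in>set js. four_cycle_edges (s n k (r + j))
      (s n k (r + j + k)) (s n k (r + j + 2 * k + 1)) (s n k (r + j + k + 1)))"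
    using assms unfolding merge_step_def[abs_def] by (rule subsetD[OF foldl_symdiff_subset])
  then consider i where "e \<in> cycle_edges (s n k i)"
    | j where "e \<in> four_cycle_edges (s n k (r + j)) (s n k (r + j + k))
                                    (s n k (r + j + 2 * k + 1)) (s n k (r + j + k + 1))"
    by blast
  then show ?thesis
  proof cases
    case 1
    with k_pos k_less show ?thesis
      by (auto simp: cycle_edges_s_residues kneser_edge_s_shift)
  next
    case 2
    with k_less show ?thesis
      by (rule kneser_edge_four_cycle)
  qed
qed

end

theorem mainTheorem12:
  fixes n k r :: nat
  assumes "k \<ge> 1" and "n \<ge> 2 * k + 1" and "r < n"
  shows "is_kneser_cycle n k (s n k ` {..<n})
           (foldl (\<lambda>A j. symdiff A (four_cycle_edges (s n k (r + j)) (s n k (r + j + k))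
                                          (s n k (r + j + 2 * k + 1)) (s n k (r + j + k + 1))))
                  (\<Union>i < gcd n k. cycle_edges (s n k i))
                  [0..<gcd n k - 1])"
proof -
  have k: "0 < k" "2 * k < n"
    using assms(1,2) by auto
  show ?thesis
    using is_cycle_merged[OF k, of r] kneser_edge_if_mem_merged[OF k, of _ r]
    unfolding merge_step_def[abs_def] by (blast intro: is_kneser_cycle_if_is_cycle)
qed

end
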